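(* Let $f,g\in\mathbb{C}(z)$ be rational functions of the same degree $d>1$, and let $C\subset\mathbb{P}^1\times\mathbb{P}^1$ be a curve which projects dominantly onto both coordinates. If $C$ is preperiodic under the endomorphism $\Phi(x,y)=(f(x),g(y))$ of $\mathbb{P}^1\times\mathbb{P}^1$, then $C$ contains infinitely many points preperiodic under $\Phi$.
   Context: A curve $Y$ is preperiodic under $\Phi$ if $\Phi^m(Y)=\Phi^n(Y)$ for some integers $n>m\ge0$; a point is preperiodic if its forward orbit is finite. *)

theory Defs
  imports Complex_Main "HOL-Computational_Algebra.Computational_Algebra"
begin

text \<open>The Riemann sphere P^1(C): None is the point at infinity.\<close>
type_synonym P1 = "complex option"

text \<open>A rational function p/q in lowest terms (q nonzero, p q coprime).\<close>
definition is_rat_fun :: "complex poly \<Rightarrow> complex poly \<Rightarrow> bool" where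
  "is_rat_fun p q \<longleftrightarrow> q \<noteq> 0 \<and> coprime p q"

definition rat_deg :: "complex poly \<Rightarrow> complex poly \<Rightarrow> nat" where
  "rat_deg p q = max (degree p) (degree q)"

definition rat_map :: "complex poly \<Rightarrow> complex poly \<Rightarrow> P1 \<Rightarrow> P1" where
  "rat_map p q w = (case w of
      Some z \<Rightarrow> (if poly q z \<noteq> 0 then Some (poly p z / poly q z) else None)
    | None \<Rightarrow> (if degree p > degree q then None
               else if degree p = degree q then Some (lead_coeff p / lead_coeff q)
               else Some 0))"

text \<open>Bivariate polynomials P(x,y) as polynomials in y with coefficients in C[x].
  x-degree of P:\<close>
definition degx :: "complex poly poly \<Rightarrow> nat" where
  "degx P = (MAX j \<in> {..degree P}. degree (coeff P j))"

text \<open>Zero locus in P^1 x P^1 of the bihomogenisation of P (bidegree (degx P, degree P)),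
  i.e. the closure in P^1 x P^1 of the affine curve P = 0.\<close>
definition curve_zero :: "complex poly poly \<Rightarrow> (P1 \<times> P1) set" where
  "curve_zero P = {(u, v). (case (u, v) of
      (Some a, Some b) \<Rightarrow> poly (map_poly (\<lambda>c. poly c a) P) b = 0
    | (None, Some b) \<Rightarrow> poly (map_poly (\<lambda>c. coeff c (degx P)) P) b = 0
    | (Some a, None) \<Rightarrow> poly (lead_coeff P) a = 0
    | (None, None) \<Rightarrow> coeff (lead_coeff P) (degx P) = 0)}"

text \<open>An (irreducible) curve in P^1 x P^1 not equal to a line at infinity.\<close>
definition is_curve :: "(P1 \<times> P1) set \<Rightarrow> bool" where
  "is_curve C \<longleftrightarrow> (\<exists>P. irreducible P \<and> C = curve_zero P)"

text \<open>Dominant projection onto P^1: image Zariski dense, i.e. infinite.\<close>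
definition dominant_fst :: "(P1 \<times> P1) set \<Rightarrow> bool" where
  "dominant_fst C \<longleftrightarrow> infinite (fst ` C)"
definition dominant_snd :: "(P1 \<times> P1) set \<Rightarrow> bool" where
  "dominant_snd C \<longleftrightarrow> infinite (snd ` C)"

definition preperiodic_set :: "('a \<Rightarrow> 'a) \<Rightarrow> 'a set \<Rightarrow> bool" where
  "preperiodic_set F Y \<longleftrightarrow> (\<exists>m n. m < n \<and> (F ^^ m) ` Y = (F ^^ n) ` Y)"

definition preperiodic_pt :: "('a \<Rightarrow> 'a) \<Rightarrow> 'a \<Rightarrow> bool" where
  "preperiodic_pt F z \<longleftrightarrow> finite (range (\<lambda>k. (F ^^ k) z))"

end

theory Submission
  imports Defs "HOL-Computational_Algebra.Field_as_Ring"
begin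

text \<open>
  A rational map F = p/q of degree e \<ge> 2 has infinitely many preperiodic points. Otherwise
  the surjective map F permutes the finite set of its preperiodic points, so each of them has a
  single preimage, i.e. is totally ramified. The Wronskian p'q - pq', a nonzero polynomial of
  degree at most 2e - 2, then vanishes to order e - 1 at every affine preperiodic point, so there
  are at most two of them. But the fixed points of F are preperiodic and simple, and there are
  e + 1 of them in the affine line, or e if \<infinity> is fixed, in which case q is constant and the
  Wronskian has degree at most e - 1.

  If a is f-preperiodic and (a, b) \<in> C, then (a, b) is \<Phi>-preperiodic: its orbit lies over the
  finite f-orbit of a and inside the finitely many sets \<Phi>^j(C), whose fibres over a point are
  finite because f and the projection of C to the first factor have finite fibres. Since C has a
  point over every affine a, this gives infinitely many preperiodic points on C.
\<close>

section \<open>Polynomials over the complex numbers\<close>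

lemma degree_eq_sum_order:
  fixes p :: "complex poly"
  assumes "p \<noteq> 0"
  shows "degree p = (\<Sum>z | poly p z = 0. order z p)"
  using size_proots_complex[of p] assms by (simp add: size_multiset_overloaded_eq)

lemma eq_smult_linear_power_if_unique_root:
  fixes p :: "complex poly"
  assumes "p \<noteq> 0" and "\<And>z. poly p z = 0 \<Longrightarrow> z = a"
  shows "p = smult (lead_coeff p) ([:-a, 1:] ^ degree p)"
proof (cases "poly p a = 0")
  case True
  then have roots: "{z. poly p z = 0} = {a}" using assms(2) by blast
  have "p = smult (lead_coeff p) (\<Prod>z | poly p z = 0. [:-z, 1:] ^ order z p)"
    by (rule complex_poly_decompose[symmetric])
  also have "\<dots> = smult (lead_coeff p) ([:-a, 1:] ^ order a p)"
    unfolding roots by simp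
  also have "order a p = degree p"
    using degree_eq_sum_order[OF assms(1)] unfolding roots by simp
  finally show ?thesis .
next
  case False
  then have "degree p = 0"
    using assms alg_closed_imp_poly_has_root[of p] by auto
  then show ?thesis by (auto elim: degree_eq_zeroE)
qed

lemma mult_card_le_degree:
  fixes p :: "complex poly"
  assumes "p \<noteq> 0" and "finite A" and "\<And>a. a \<in> A \<Longrightarrow> [:-a, 1:] ^ n dvd p" and "n \<ge> 1"
  shows "n * card A \<le> degree p"
proof -
  have order_ge: "n \<le> order a p" if "a \<in> A" for a
    using assms(1) assms(3)[OF that] by (simp add: order_divides)
  have A_roots: "A \<subseteq> {z. poly p z = 0}"
    using order_ge assms(1,4) by (force simp: order_root)
  have "n * card A = (\<Sum>a\<in>A. n)"
    by simp
  also have "\<dots> \<le> (\<Sum>a\<in>A. order a p)"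
    by (intro sum_mono order_ge)
  also have "\<dots> \<le> (\<Sum>z | poly p z = 0. order z p)"
    using A_roots assms(1) by (intro sum_mono2 poly_roots_finite) auto
  also have "\<dots> = degree p"
    using degree_eq_sum_order[OF assms(1)] by simp
  finally show ?thesis .
qed

lemma degree_le_card_if_simple_roots:
  fixes p :: "complex poly"
  assumes "p \<noteq> 0" and "finite A" and "\<And>z. poly p z = 0 \<Longrightarrow> z \<in> A \<and> order z p = 1"
  shows "degree p \<le> card A"
proof -
  have "degree p = (\<Sum>z | poly p z = 0. order z p)"
    by (rule degree_eq_sum_order[OF assms(1)])
  also have "\<dots> = card {z. poly p z = 0}"
    using assms(3) by simp
  also have "\<dots> \<le> card A"
    using assms(2,3) by (intro card_mono) auto
  finally show ?thesis .
qed

lemma linear_power_dvd_smult_and_pderiv: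
  fixes a k :: "'a :: idom"
  shows "[:-a, 1:] ^ (n - 1) dvd smult k ([:-a, 1:] ^ n)
    \<and> [:-a, 1:] ^ (n - 1) dvd pderiv (smult k ([:-a, 1:] ^ n))"
proof (cases n)
  case (Suc m)
  have "pderiv (smult k ([:-a, 1:] ^ n)) = smult k (smult (of_nat n) ([:-a, 1:] ^ m) * pderiv [:-a, 1:])"
    using Suc by (simp only: pderiv_smult pderiv_power_Suc)
  moreover have "[:-a, 1:] ^ n = [:-a, 1:] ^ m * [:-a, 1:]"
    using Suc by simp
  ultimately show ?thesis
    using Suc by (metis diff_Suc_1 dvd_mult2 dvd_refl dvd_smult mult_smult_left)
qed simp

section \<open>The Wronskian\<close>

definition wronskian :: "'a :: idom poly \<Rightarrow> 'a poly \<Rightarrow> 'a poly" where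
  "wronskian p q = pderiv p * q - p * pderiv q"

lemma wronskian_diff_smult: "wronskian (p - smult c q) q = wronskian p q"
  by (simp add: wronskian_def pderiv_diff pderiv_smult algebra_simps)

lemma degree_wronskian_le:
  fixes p q :: "'a :: {idom, semiring_char_0} poly"
  shows "degree (wronskian p q) \<le> degree p + degree q - 1"
proof -
  have "degree (pderiv p * q) \<le> degree p + degree q - 1"
    using degree_mult_le[of "pderiv p" q] pderiv_eq_0_iff[of p]
    by (cases "degree p = 0") (auto simp: degree_pderiv)
  moreover have "degree (p * pderiv q) \<le> degree p + degree q - 1"
    using degree_mult_le[of p "pderiv q"] pderiv_eq_0_iff[of q]
    by (cases "degree q = 0") (auto simp: degree_pderiv)
  ultimately show ?thesis
    unfolding wronskian_def by (rule degree_diff_le)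
qed

section \<open>Rational maps of the Riemann sphere\<close>

lemma is_rat_fun_no_common_root:
  assumes "is_rat_fun p q" and "poly q a = 0"
  shows "poly p a \<noteq> 0"
proof
  assume "poly p a = 0"
  then have "is_unit [:-a, 1:]"
    using assms by (intro coprime_common_divisor[of p q]) (auto simp: is_rat_fun_def dvd_iff_poly_eq_0)
  then show False by (simp add: is_unit_iff_degree)
qed

lemma degree_wronskian_le_rat_deg:
  assumes "is_rat_fun p q" and "rat_deg p q \<ge> 1"
  shows "degree (wronskian p q) \<le> 2 * rat_deg p q - 2"
proof (cases "degree p = degree q")
  case True
  have "q \<noteq> 0" using assms(1) by (simp add: is_rat_fun_def)
  define h where "h = p - smult (lead_coeff p / lead_coeff q) q"
  have "coeff h (degree q) = 0" and "degree h \<le> degree q"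
    using True \<open>q \<noteq> 0\<close> by (auto simp: h_def intro: degree_diff_le)
  then have "degree h < degree q \<or> h = 0"
    by (metis le_neq_implies_less leading_coeff_0_iff)
  then have "degree h \<le> degree q - 1"
    by auto
  have "degree (wronskian p q) = degree (wronskian h q)"
    by (simp add: h_def wronskian_diff_smult)
  also have "\<dots> \<le> degree h + degree q - 1"
    by (rule degree_wronskian_le)
  finally show ?thesis
    using \<open>degree h \<le> degree q - 1\<close> True assms(2) by (simp add: rat_deg_def)
next
  case False
  then show ?thesis
    using degree_wronskian_le[of p q] by (simp add: rat_deg_def)
qed

lemma wronskian_nonzero:
  assumes "is_rat_fun p q" and "rat_deg p q \<ge> 1"
  shows "wronskian p q \<noteq> 0"
proof
  assume "wronskian p q = 0"
  then have eq: "pderiv p * q = p * pderiv q" by (simp add: wronskian_def)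
  have "coprime q p" and "q \<noteq> 0"
    using assms(1) by (auto simp: is_rat_fun_def coprime_commute)
  have "q dvd p * pderiv q"
    by (metis eq dvd_triv_right)
  then have "q dvd pderiv q"
    using coprime_dvd_mult_right_iff[of q p "pderiv q"] \<open>coprime q p\<close> by simp
  then have "pderiv q = 0"
    using dvd_imp_degree_le[of q "pderiv q"] by (auto simp: degree_pderiv pderiv_eq_0_iff)
  then have "pderiv p = 0"
    using eq \<open>q \<noteq> 0\<close> by simp
  then show False
    using \<open>pderiv q = 0\<close> assms(2) by (simp add: pderiv_eq_0_iff rat_deg_def)
qed

definition fibre_poly :: "complex poly \<Rightarrow> complex poly \<Rightarrow> P1 \<Rightarrow> complex poly" where
  "fibre_poly p q s = (case s of None \<Rightarrow> q | Some c \<Rightarrow> p - smult c q)"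

lemma rat_map_Some_eq_iff:
  assumes "is_rat_fun p q"
  shows "rat_map p q (Some b) = s \<longleftrightarrow> poly (fibre_poly p q s) b = 0"
proof (cases s)
  case (Some c)
  show ?thesis
  proof (cases "poly q b = 0")
    case True
    then show ?thesis
      using Some is_rat_fun_no_common_root[OF assms] by (simp add: rat_map_def fibre_poly_def)
  next
    case False
    then show ?thesis
      using Some by (auto simp: rat_map_def fibre_poly_def field_simps)
  qed
qed (simp add: rat_map_def fibre_poly_def)

lemma fibre_poly_nonzero:
  assumes "is_rat_fun p q" and "rat_deg p q \<ge> 1"
  shows "fibre_poly p q s \<noteq> 0"
proof (cases s)
  case None
  then show ?thesis using assms(1) by (simp add: fibre_poly_def is_rat_fun_def)
next
  case (Some c)
  have "coprime p q" and "q \<noteq> 0"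
    using assms(1) by (auto simp: is_rat_fun_def)
  show ?thesis
  proof
    assume "fibre_poly p q s = 0"
    then have p_eq: "p = smult c q"
      using Some by (simp add: fibre_poly_def)
    then have "is_unit q"
      using \<open>coprime p q\<close> by (metis coprime_common_divisor dvd_refl dvd_smult)
    then have "degree q = 0"
      using \<open>q \<noteq> 0\<close> by (simp add: is_unit_iff_degree)
    then show False
      using assms(2) p_eq by (simp add: rat_deg_def split: if_splits)
  qed
qed

lemma degree_fibre_poly:
  assumes "is_rat_fun p q" and "rat_map p q None \<noteq> s"
  shows "degree (fibre_poly p q s) = rat_deg p q"
proof (cases s)
  case None
  then show ?thesis
    using assms(2) by (auto simp: fibre_poly_def rat_map_def rat_deg_def split: if_splits)
next
  case (Some c)
  let ?h = "p - smult c q"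
  have "q \<noteq> 0" using assms(1) by (simp add: is_rat_fun_def)
  have le: "degree ?h \<le> rat_deg p q"
    by (rule degree_diff_le) (auto simp: rat_deg_def)
  have "coeff ?h (rat_deg p q) \<noteq> 0"
  proof (cases "degree p" "degree q" rule: linorder_cases)
    case less
    then have "c \<noteq> 0" using assms(2) Some by (auto simp: rat_map_def)
    then show ?thesis
      using less \<open>q \<noteq> 0\<close> by (simp add: rat_deg_def coeff_eq_0)
  next
    case equal
    then have "c \<noteq> lead_coeff p / lead_coeff q"
      using assms(2) Some by (auto simp: rat_map_def)
    then show ?thesis
      using equal \<open>q \<noteq> 0\<close> by (auto simp: rat_deg_def field_simps)
  next
    case greater
    then show ?thesis
      by (auto simp: rat_deg_def coeff_eq_0)
  qed
  then show ?thesis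
    using le le_degree Some by (fastforce simp: fibre_poly_def)
qed

lemma surj_rat_map:
  assumes "is_rat_fun p q" and "rat_deg p q \<ge> 1"
  shows "surj (rat_map p q)"
  unfolding surj_def
proof
  fix s
  show "\<exists>t. s = rat_map p q t"
  proof (cases "rat_map p q None = s")
    case False
    then have "degree (fibre_poly p q s) > 0"
      using degree_fibre_poly[OF assms(1)] assms(2) by simp
    then obtain b where "poly (fibre_poly p q s) b = 0"
      using alg_closed_imp_poly_has_root by blast
    then show ?thesis
      using rat_map_Some_eq_iff[OF assms(1)] by metis
  qed auto
qed

lemma finite_rat_map_fibre:
  assumes "is_rat_fun p q" and "rat_deg p q \<ge> 1"
  shows "finite {t. rat_map p q t = s}"
proof (rule finite_subset)
  show "{t. rat_map p q t = s} \<subseteq> insert None (Some ` {b. poly (fibre_poly p q s) b = 0})"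
  proof
    fix t assume "t \<in> {t. rat_map p q t = s}"
    then show "t \<in> insert None (Some ` {b. poly (fibre_poly p q s) b = 0})"
      using rat_map_Some_eq_iff[OF assms(1)] by (cases t) auto
  qed
  show "finite (insert None (Some ` {b. poly (fibre_poly p q s) b = 0}))"
    using poly_roots_finite[OF fibre_poly_nonzero[OF assms]] by simp
qed

lemma fibre_poly_eq_if_unique_preimage:
  assumes "is_rat_fun p q" and "rat_deg p q \<ge> 1"
    and "rat_map p q (Some a) = s" and "\<And>t. rat_map p q t = s \<Longrightarrow> t = Some a"
  shows "fibre_poly p q s = smult (lead_coeff (fibre_poly p q s)) ([:-a, 1:] ^ rat_deg p q)"
proof -
  have "degree (fibre_poly p q s) = rat_deg p q"
    using degree_fibre_poly[OF assms(1)] assms(4) by blast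
  moreover have "\<And>z. poly (fibre_poly p q s) z = 0 \<Longrightarrow> z = a"
    using assms(4) rat_map_Some_eq_iff[OF assms(1)] by blast
  ultimately show ?thesis
    using eq_smult_linear_power_if_unique_root[OF fibre_poly_nonzero[OF assms(1,2)]] by metis
qed

lemma dvd_wronskian_if_dvd_fibre_poly:
  assumes "r dvd fibre_poly p q s" and "r dvd pderiv (fibre_poly p q s)"
  shows "r dvd wronskian p q"
proof (cases s)
  case None
  then show ?thesis
    using assms by (simp add: fibre_poly_def wronskian_def dvd_diff)
next
  case (Some c)
  then have "wronskian p q = wronskian (fibre_poly p q s) q"
    by (simp add: fibre_poly_def wronskian_diff_smult)
  then show ?thesis
    using assms by (simp add: wronskian_def dvd_diff)
qed

lemma linear_power_dvd_wronskian_if_unique_preimage: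
  assumes "is_rat_fun p q" and "rat_deg p q \<ge> 1"
    and "rat_map p q (Some a) = s" and "\<And>t. rat_map p q t = s \<Longrightarrow> t = Some a"
  shows "[:-a, 1:] ^ (rat_deg p q - 1) dvd wronskian p q"
  using fibre_poly_eq_if_unique_preimage[OF assms] linear_power_dvd_smult_and_pderiv
  by (metis dvd_wronskian_if_dvd_fibre_poly)

definition fixpoint_poly :: "complex poly \<Rightarrow> complex poly \<Rightarrow> complex poly" where
  "fixpoint_poly p q = p - [:0, 1:] * q"

lemma poly_fixpoint_poly_eq_0_iff:
  assumes "is_rat_fun p q"
  shows "poly (fixpoint_poly p q) b = 0 \<longleftrightarrow> rat_map p q (Some b) = Some b"
  using rat_map_Some_eq_iff[OF assms, of b "Some b"]
  by (simp add: fixpoint_poly_def fibre_poly_def algebra_simps)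

lemma degree_fixpoint_poly_if_le:
  assumes "q \<noteq> 0" and "degree p \<le> degree q"
  shows "degree (fixpoint_poly p q) = degree q + 1"
proof -
  have "degree (p + - pCons 0 q) = degree (- pCons 0 q)"
    using assms by (intro degree_add_eq_right) simp
  then show ?thesis
    using assms(1) by (simp add: fixpoint_poly_def diff_conv_add_uminus)
qed

lemma degree_fixpoint_poly_if_gt:
  assumes "degree q + 1 < degree p"
  shows "degree (fixpoint_poly p q) = degree p"
proof -
  have "degree (p + - pCons 0 q) = degree p"
    using assms by (intro degree_add_eq_left) auto
  then show ?thesis
    by (simp add: fixpoint_poly_def diff_conv_add_uminus)
qed

lemma order_fixpoint_poly_if_unique_preimage:
  assumes "is_rat_fun p q" and "rat_deg p q \<ge> 2"
    and "rat_map p q (Some b) = Some b" and "\<And>t. rat_map p q t = Some b \<Longrightarrow> t = Some b"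
  shows "order b (fixpoint_poly p q) = 1"
proof -
  obtain m where m: "rat_deg p q = Suc m" and "m \<ge> 1"
    using assms(2) by (metis Suc_le_D Suc_le_mono one_add_one plus_1_eq_Suc)
  define k where "k = lead_coeff (fibre_poly p q (Some b))"
  define r where "r = smult k ([:-b, 1:] ^ m) - q"
  have "fibre_poly p q (Some b) = smult k ([:-b, 1:] ^ Suc m)"
    using fibre_poly_eq_if_unique_preimage[OF assms(1) _ assms(3,4)] assms(2) m
    by (simp add: k_def)
  then have factor: "fixpoint_poly p q = [:-b, 1:] * r"
    by (simp add: fixpoint_poly_def fibre_poly_def r_def algebra_simps)
  have "poly q b \<noteq> 0"
    using assms(3) by (auto simp: rat_map_def split: if_splits)
  then have "poly r b \<noteq> 0"
    using \<open>m \<ge> 1\<close> by (simp add: r_def power_0_left)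
  then have "order b r = 0" and "[:-b, 1:] * r \<noteq> 0"
    by (auto simp: order_0I simp del: mult_pCons_left)
  then show ?thesis
    unfolding factor using order_power_n_n[of b 1] by (subst order_mult) simp_all
qed

section \<open>Preperiodic points\<close>

lemma preperiodic_pt_apply_iff: "preperiodic_pt F (F x) \<longleftrightarrow> preperiodic_pt F x"
proof -
  have nat_UNIV: "(UNIV :: nat set) = insert 0 (range Suc)"
    by (simp add: set_eq_iff image_iff) (metis not0_implies_Suc)
  have "range (\<lambda>k. (F ^^ k) x) = insert x (range (\<lambda>k. (F ^^ k) (F x)))"
    by (subst nat_UNIV) (simp add: image_image funpow_swap1 del: funpow.simps add: funpow_Suc_right)
  then show ?thesis
    unfolding preperiodic_pt_def by simp
qed

lemma preperiodic_pt_if_fixpoint: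
  assumes "F x = x"
  shows "preperiodic_pt F x"
proof -
  have "(F ^^ k) x = x" for k
    by (induction k) (simp_all add: assms)
  then show ?thesis
    by (simp add: preperiodic_pt_def)
qed

lemma unique_preimage_if_finite_preperiodic:
  assumes "surj F" and "finite {x. preperiodic_pt F x}"
    and "preperiodic_pt F (F t)" and "F t' = F t"
  shows "t' = t"
proof -
  let ?S = "{x. preperiodic_pt F x}"
  have "F ` ?S = ?S"
  proof
    show "F ` ?S \<subseteq> ?S"
      by (auto simp: preperiodic_pt_apply_iff)
    show "?S \<subseteq> F ` ?S"
      using assms(1) by (force simp: preperiodic_pt_apply_iff)
  qed
  then have "inj_on F ?S"
    using assms(2) by (simp add: eq_card_imp_inj_on)
  moreover have "t \<in> ?S" and "t' \<in> ?S"
    using assms(3,4) by (metis mem_Collect_eq preperiodic_pt_apply_iff)+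
  ultimately show ?thesis
    using assms(4) by (auto dest: inj_onD)
qed

lemma unique_preimage_if_finite_preperiodic_rat_map:
  assumes "is_rat_fun p q" and "rat_deg p q \<ge> 1"
    and "finite {a. preperiodic_pt (rat_map p q) (Some a)}"
    and "preperiodic_pt (rat_map p q) (rat_map p q t)" and "rat_map p q t' = rat_map p q t"
  shows "t' = t"
proof -
  let ?A = "{a. preperiodic_pt (rat_map p q) (Some a)}"
  have "{x. preperiodic_pt (rat_map p q) x} \<subseteq> insert None (Some ` ?A)"
  proof
    fix x assume "x \<in> {x. preperiodic_pt (rat_map p q) x}"
    then show "x \<in> insert None (Some ` ?A)" by (cases x) auto
  qed
  then have "finite {x. preperiodic_pt (rat_map p q) x}"
    using assms(3) by (meson finite_imageI finite_insert finite_subset)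
  then show ?thesis
    using unique_preimage_if_finite_preperiodic[OF surj_rat_map[OF assms(1,2)] _ assms(4,5)] by simp
qed

lemma mult_degree_fixpoint_poly_le_degree_wronskian:
  assumes rf: "is_rat_fun p q" and deg: "rat_deg p q \<ge> 2"
    and fin: "finite {a. preperiodic_pt (rat_map p q) (Some a)}" and "fixpoint_poly p q \<noteq> 0"
  shows "(rat_deg p q - 1) * degree (fixpoint_poly p q) \<le> degree (wronskian p q)"
proof -
  let ?F = "rat_map p q"
  let ?A = "{a. preperiodic_pt ?F (Some a)}"
  have unique: "t' = t" if "preperiodic_pt ?F (?F t)" and "?F t' = ?F t" for t t'
    using unique_preimage_if_finite_preperiodic_rat_map[OF rf _ fin that] deg by simp
  have "[:-a, 1:] ^ (rat_deg p q - 1) dvd wronskian p q" if "a \<in> ?A" for a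
    using that unique deg preperiodic_pt_apply_iff[of ?F "Some a"]
    by (intro linear_power_dvd_wronskian_if_unique_preimage[OF rf _ refl]) auto
  then have "(rat_deg p q - 1) * card ?A \<le> degree (wronskian p q)"
    using wronskian_nonzero[OF rf] deg fin by (intro mult_card_le_degree) auto
  moreover have "b \<in> ?A \<and> order b (fixpoint_poly p q) = 1" if "poly (fixpoint_poly p q) b = 0" for b
  proof -
    have fixed: "?F (Some b) = Some b"
      using that poly_fixpoint_poly_eq_0_iff[OF rf] by simp
    then have "preperiodic_pt ?F (?F (Some b))"
      by (simp add: preperiodic_pt_if_fixpoint)
    then show ?thesis
      using order_fixpoint_poly_if_unique_preimage[OF rf deg fixed] unique fixed by auto
  qed
  then have "degree (fixpoint_poly p q) \<le> card ?A"
    using degree_le_card_if_simple_roots[OF \<open>fixpoint_poly p q \<noteq> 0\<close> fin] by blast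
  ultimately show ?thesis
    by (meson le_trans mult_le_mono2)
qed

theorem infinite_preperiodic_rat_map:
  assumes rf: "is_rat_fun p q" and deg: "rat_deg p q \<ge> 2"
  shows "infinite {a. preperiodic_pt (rat_map p q) (Some a)}"
proof
  let ?F = "rat_map p q"
  define e where "e = rat_deg p q"
  have "e \<ge> 2" using deg by (simp add: e_def)
  assume fin: "finite {a. preperiodic_pt ?F (Some a)}"
  obtain n m where deg_fix: "degree (fixpoint_poly p q) = n"
    and deg_W: "degree (wronskian p q) \<le> (e - 1) * m" and "m < n"
  proof (cases "degree p \<le> degree q")
    case True
    have "q \<noteq> 0" using rf by (simp add: is_rat_fun_def)
    then have "degree (fixpoint_poly p q) = e + 1"
      using True degree_fixpoint_poly_if_le by (simp add: e_def rat_deg_def)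
    moreover have "degree (wronskian p q) \<le> (e - 1) * 2"
      using degree_wronskian_le_rat_deg[OF rf] deg by (simp add: e_def)
    ultimately show ?thesis
      using that \<open>e \<ge> 2\<close> by simp
  next
    case False
    \<comment> \<open>Then \<infinity> is a fixed point; being totally ramified, it forces q to be constant.\<close>
    then have "?F None = None"
      by (simp add: rat_map_def)
    then have "\<not> poly q b = 0" for b
      using unique_preimage_if_finite_preperiodic_rat_map[OF rf _ fin, of None "Some b"] deg
        preperiodic_pt_if_fixpoint[of ?F None] rat_map_Some_eq_iff[OF rf, of b None]
      by (auto simp: fibre_poly_def)
    then have "degree q = 0"
      using alg_closed_imp_poly_has_root by blast
    then have "degree (fixpoint_poly p q) = e"
      and "degree (wronskian p q) \<le> (e - 1) * 1"
      using False degree_fixpoint_poly_if_gt \<open>e \<ge> 2\<close> degree_wronskian_le[of p q]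
      by (simp_all add: e_def rat_deg_def)
    then show ?thesis
      using that[of e 1] \<open>e \<ge> 2\<close> by simp
  qed
  then have "fixpoint_poly p q \<noteq> 0"
    by auto
  then have "(e - 1) * n \<le> degree (wronskian p q)"
    using mult_degree_fixpoint_poly_le_degree_wronskian[OF rf deg fin] deg_fix by (simp add: e_def)
  then have "(e - 1) * n \<le> (e - 1) * m"
    using deg_W by (rule le_trans)
  then show False
    using \<open>m < n\<close> \<open>e \<ge> 2\<close> by simp
qed

section \<open>Curves in the product of two Riemann spheres\<close>

lemma degree_pos_if_dominant_fst:
  fixes P :: "complex poly poly"
  assumes "irreducible P" and "dominant_fst (curve_zero P)"
  shows "degree P \<ge> 1"
proof (rule ccontr)
  assume "\<not> degree P \<ge> 1"
  then obtain c where P: "P = [:c:]"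
    by (metis degree_eq_zeroE less_one not_le)
  have "c \<noteq> 0"
    using assms(1) P by auto
  have "map_poly (\<lambda>c. poly c a) P = [:poly c a:]" for a
    by (simp add: P map_poly_pCons)
  then have "fst ` curve_zero P \<subseteq> insert None (Some ` {a. poly c a = 0})"
    by (force simp: curve_zero_def P split: option.splits)
  moreover have "finite (insert None (Some ` {a. poly c a = 0}))"
    using poly_roots_finite[OF \<open>c \<noteq> 0\<close>] by simp
  ultimately show False
    using assms(2) by (auto simp: dominant_fst_def intro: finite_subset)
qed

lemma map_poly_poly_nonzero_if_irreducible:
  fixes P :: "complex poly poly"
  assumes "irreducible P" and "degree P \<ge> 1"
  shows "map_poly (\<lambda>c. poly c a) P \<noteq> 0"
proof
  assume vanish: "map_poly (\<lambda>c. poly c a) P = 0"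
  define g :: "complex poly" where "g = [:-a, 1:]"
  have dvd: "g dvd coeff P j" for j
    using arg_cong[OF vanish, of "\<lambda>Q. coeff Q j"]
    by (simp add: g_def coeff_map_poly dvd_iff_poly_eq_0)
  define Q where "Q = map_poly (\<lambda>c. c div g) P"
  have factor: "P = [:g:] * Q"
    using dvd by (simp add: poly_eq_iff Q_def coeff_map_poly)
  have "\<not> is_unit [:g:]"
    by (simp add: g_def is_unit_const_poly_iff is_unit_iff_degree)
  moreover have "\<not> is_unit Q"
    using assms(2) factor by (auto simp: g_def is_unit_poly_iff)
  ultimately show False
    using irreducibleD[OF assms(1) factor] by blast
qed

lemma map_poly_coeff_degx_nonzero:
  fixes P :: "complex poly poly"
  assumes "P \<noteq> 0"
  shows "map_poly (\<lambda>c. coeff c (degx P)) P \<noteq> 0"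
proof -
  have coeff_eq: "coeff (map_poly (\<lambda>c. coeff c (degx P)) P) j = coeff (coeff P j) (degx P)" for j
    by (simp add: coeff_map_poly)
  have "degx P \<in> (\<lambda>j. degree (coeff P j)) ` {..degree P}"
    unfolding degx_def by (rule Max_in) auto
  then obtain j where "degree (coeff P j) = degx P"
    by auto
  show ?thesis
  proof (cases "coeff P j = 0")
    case False
    then show ?thesis
      using coeff_eq[of j] \<open>degree (coeff P j) = degx P\<close> by (metis coeff_0 leading_coeff_0_iff)
  next
    case True
    then have "degx P = 0"
      using \<open>degree (coeff P j) = degx P\<close> by simp
    moreover have "degree (lead_coeff P) \<le> degx P"
      unfolding degx_def by (rule Max_ge) auto
    ultimately have "coeff (lead_coeff P) (degx P) \<noteq> 0"
      using assms by (metis le_zero_eq leading_coeff_0_iff leading_coeff_neq_0)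
    then show ?thesis
      using coeff_eq[of "degree P"] by (metis coeff_0)
  qed
qed

lemma curve_zero_fibre_nonempty:
  fixes P :: "complex poly poly"
  assumes "degree P \<ge> 1"
  shows "\<exists>v. (Some a, v) \<in> curve_zero P"
proof (cases "degree (map_poly (\<lambda>c. poly c a) P) > 0")
  case True
  then obtain b where "poly (map_poly (\<lambda>c. poly c a) P) b = 0"
    using alg_closed_imp_poly_has_root by blast
  then have "(Some a, Some b) \<in> curve_zero P"
    by (simp add: curve_zero_def)
  then show ?thesis ..
next
  case False
  then have "coeff (map_poly (\<lambda>c. poly c a) P) (degree P) = 0"
    using assms by (intro coeff_eq_0) simp
  then have "(Some a, None) \<in> curve_zero P"
    by (simp add: curve_zero_def coeff_map_poly)
  then show ?thesis ..
qed

lemma finite_curve_zero_fibre: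
  fixes P :: "complex poly poly"
  assumes "irreducible P" and "degree P \<ge> 1"
  shows "finite {v. (u, v) \<in> curve_zero P}"
proof -
  obtain R where "R \<noteq> 0" and roots: "\<And>b. (u, Some b) \<in> curve_zero P \<Longrightarrow> poly R b = 0"
  proof (cases u)
    case None
    then show ?thesis
      using assms(1) by (intro that[OF map_poly_coeff_degx_nonzero]) (auto simp: curve_zero_def)
  next
    case (Some a)
    then show ?thesis
      by (intro that[OF map_poly_poly_nonzero_if_irreducible[OF assms]]) (auto simp: curve_zero_def)
  qed
  have "{v. (u, v) \<in> curve_zero P} \<subseteq> insert None (Some ` {b. poly R b = 0})"
  proof
    fix v assume "v \<in> {v. (u, v) \<in> curve_zero P}"
    then show "v \<in> insert None (Some ` {b. poly R b = 0})"
      using roots by (cases v) auto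
  qed
  then show ?thesis
    using poly_roots_finite[OF \<open>R \<noteq> 0\<close>] by (meson finite_imageI finite_insert finite_subset)
qed

section \<open>Dynamics of product maps\<close>

lemma funpow_map_prod:
  fixes F :: "'a \<Rightarrow> 'a" and G :: "'b \<Rightarrow> 'b"
  shows "map_prod F G ^^ k = map_prod (F ^^ k) (G ^^ k)"
  by (induction k) (simp_all add: fun_eq_iff)

lemma finite_funpow_fibre:
  fixes F :: "'a \<Rightarrow> 'a"
  assumes "\<And>x. finite {t. F t = x}"
  shows "finite {t. (F ^^ k) t = x}"
proof (induction k arbitrary: x)
  case (Suc k)
  have "{t. (F ^^ Suc k) t = x} = (\<Union>y\<in>{y. F y = x}. {t. (F ^^ k) t = y})"
    by auto
  then show ?case
    using assms Suc by simp
qed simp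

lemma funpow_image_cycle:
  fixes H :: "'a \<Rightarrow> 'a"
  assumes "m < n" and "(H ^^ m) ` C = (H ^^ n) ` C"
  shows "\<exists>j<n. (H ^^ k) ` C = (H ^^ j) ` C"
proof (induction k rule: less_induct)
  case (less k)
  show ?case
  proof (cases "k < n")
    case False
    then have "(H ^^ k) ` C = (H ^^ (k - n)) ` (H ^^ n) ` C"
      by (metis funpow_add image_comp le_add_diff_inverse2 not_less)
    also have "\<dots> = (H ^^ (k - n)) ` (H ^^ m) ` C"
      using assms(2) by simp
    also have "\<dots> = (H ^^ (k - n + m)) ` C"
      by (simp add: funpow_add image_comp)
    finally show ?thesis
      using less[of "k - n + m"] assms(1) False by auto
  qed blast
qed

lemma finite_fibre_funpow_image_map_prod:
  fixes F :: "'a \<Rightarrow> 'a" and G :: "'b \<Rightarrow> 'b"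
  assumes "\<And>x. finite {t. F t = x}" and "\<And>u. finite {v. (u, v) \<in> C}"
  shows "finite {v. (x, v) \<in> (map_prod F G ^^ j) ` C}"
proof -
  let ?U = "\<Union>u\<in>{t. (F ^^ j) t = x}. {v. (u, v) \<in> C}"
  have "{v. (x, v) \<in> (map_prod F G ^^ j) ` C} \<subseteq> (G ^^ j) ` ?U"
    by (force simp: funpow_map_prod)
  moreover have "finite ?U"
    using finite_funpow_fibre[OF assms(1)] assms(2) by blast
  ultimately show ?thesis
    by (meson finite_imageI finite_subset)
qed

lemma preperiodic_pt_map_prod_if_preperiodic_set:
  fixes F :: "'a \<Rightarrow> 'a" and G :: "'b \<Rightarrow> 'b"
  assumes "preperiodic_set (map_prod F G) C"
    and "\<And>x. finite {t. F t = x}" and "\<And>u. finite {v. (u, v) \<in> C}"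
    and "z \<in> C" and "preperiodic_pt F (fst z)"
  shows "preperiodic_pt (map_prod F G) z"
proof -
  let ?H = "map_prod F G"
  let ?orbit = "range (\<lambda>k. (F ^^ k) (fst z))"
  obtain m n where "m < n" and "(?H ^^ m) ` C = (?H ^^ n) ` C"
    using assms(1) by (auto simp: preperiodic_set_def)
  have "range (\<lambda>k. (?H ^^ k) z) \<subseteq> (SIGMA x:?orbit. \<Union>j<n. {v. (x, v) \<in> (?H ^^ j) ` C})"
  proof
    fix y assume "y \<in> range (\<lambda>k. (?H ^^ k) z)"
    then obtain k where y: "y = (?H ^^ k) z" by auto
    obtain j where "j < n" and "(?H ^^ k) ` C = (?H ^^ j) ` C"
      using funpow_image_cycle[OF \<open>m < n\<close> \<open>(?H ^^ m) ` C = (?H ^^ n) ` C\<close>] by blast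
    then have "y \<in> (?H ^^ j) ` C"
      using y assms(4) by blast
    moreover have "fst y \<in> ?orbit"
      using y by (simp add: funpow_map_prod)
    ultimately show "y \<in> (SIGMA x:?orbit. \<Union>j<n. {v. (x, v) \<in> (?H ^^ j) ` C})"
      using \<open>j < n\<close> by (cases y) auto
  qed
  moreover have "finite (SIGMA x:?orbit. \<Union>j<n. {v. (x, v) \<in> (?H ^^ j) ` C})"
    using assms(5) finite_fibre_funpow_image_map_prod[OF assms(2,3)]
    by (intro finite_SigmaI) (auto simp: preperiodic_pt_def)
  ultimately show ?thesis
    unfolding preperiodic_pt_def by (rule finite_subset)
qed

theorem lemma6p1:
  fixes f1 f2 g1 g2 :: "complex poly" and d :: nat and C :: "(P1 \<times> P1) set"
  assumes "is_rat_fun f1 f2" and "is_rat_fun g1 g2"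
    and "rat_deg f1 f2 = d" and "rat_deg g1 g2 = d" and "d > 1"
    and "is_curve C" and "dominant_fst C" and "dominant_snd C"
    and "preperiodic_set (map_prod (rat_map f1 f2) (rat_map g1 g2)) C"
  shows "infinite {z \<in> C. preperiodic_pt (map_prod (rat_map f1 f2) (rat_map g1 g2)) z}"
proof -
  let ?F = "rat_map f1 f2" and ?\<Phi> = "map_prod (rat_map f1 f2) (rat_map g1 g2)"
  let ?A = "{a. preperiodic_pt ?F (Some a)}"
  obtain P where "irreducible P" and C: "C = curve_zero P"
    using assms(6) by (auto simp: is_curve_def)
  then have "degree P \<ge> 1"
    using degree_pos_if_dominant_fst assms(7) by blast
  then obtain \<sigma> where \<sigma>: "\<And>a. (Some a, \<sigma> a) \<in> C"
    using curve_zero_fibre_nonempty C by metis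
  have "preperiodic_pt ?\<Phi> (Some a, \<sigma> a)" if "a \<in> ?A" for a
    using assms(1,3,5) that \<sigma> finite_curve_zero_fibre[OF \<open>irreducible P\<close> \<open>degree P \<ge> 1\<close>] C
    by (intro preperiodic_pt_map_prod_if_preperiodic_set[OF assms(9) finite_rat_map_fibre]) auto
  then have "(\<lambda>a. (Some a, \<sigma> a)) ` ?A \<subseteq> {z \<in> C. preperiodic_pt ?\<Phi> z}"
    using \<sigma> by auto
  moreover have "infinite ((\<lambda>a. (Some a, \<sigma> a)) ` ?A)"
    using infinite_preperiodic_rat_map[OF assms(1)] assms(3,5)
    by (simp add: finite_image_iff inj_on_def)
  ultimately show ?thesis
    by (rule infinite_super)
qed

end
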